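(* Let $(X,\mathcal F)$ be a measurable space, $Y=[0,1]$ or $Y=[0,\infty]$, and $\mu\colon\mathcal F\to Y$ a monotone measure. Let $\circ,\star,\Box\colon Y\times Y\to Y$ be non-decreasing operators, let $\circledcirc\colon Y\times Y\to Y$ be a non-decreasing and left-continuous operator, and let $\triangle\colon Y\times Y\to Y$ be an arbitrary operator. Assume that for all $a,b,c,d\in Y$ and all $t\ge 1$, $$a^t\circ b\ge (a\circ b)^t,\qquad (a\,\Box\, b)\circ(c\,\triangle\, d)\ge (a\circ c)\circledcirc(b\circ d).$$ Let $p,q\ge 1$, $r,s>0$, let $A,B\in\mathcal F$ and let $f,g,h\colon X\to Y$ be measurable functions such that the pairs $f|_A, g|_B$ and $f|_A, h|_B$ are each positively dependent with respect to $\mu$ and $\triangle$. Then $$\Big(\Big(\int_A f\circ\mu\Big)\circledcirc\Big(\int_B g\circ\mu\Big)\Big)^r\star\Big(\Big(\int_A f\circ\mu\Big)\circledcirc\Big(\int_B h\circ\mu\Big)\Big)^s\le\Big(\int_{A\cap B}(f\,\Box\, g)^p\circ\mu\Big)^{r/p}\star\Big(\int_{A\cap B}(f\,\Box\, h)^q\circ\mu\Big)^{s/q}.$$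
   Context: A monotone measure is a map $\mu\colon\mathcal F\to Y$ with $\mu(\emptyset)=0$, $\mu(X)>0$ and $\mu(A)\le\mu(B)$ whenever $A\subset B$. An operator $\circ\colon Y\times Y\to Y$ is non-decreasing if $a\circ c\ge b\circ d$ whenever $a\ge b$ and $c\ge d$; it is left-continuous if $\lim_n (x_n\circ y_n)=x\circ y$ whenever $x_n\nearrow x$, $y_n\nearrow y$ (strictly increasing sequences converging to $x$, $y$). For a measurable $h\colon X\to Y$, $A\in\mathcal F$ and a non-decreasing operator $\circ$, the generalized Sugeno integral is $\int_A h\circ\mu=\sup_{\alpha\in Y}\{\alpha\circ\mu(A\cap\{h\ge\alpha\})\}$, where $\{h\ge\alpha\}=\{x\in X: h(x)\ge\alpha\}$. For $C\subset X$, $h|_C$ denotes the restriction and $\{h|_C\ge a\}=C\cap\{h\ge a\}$. Functions $f|_A$ and $g|_B$ are positively dependent with respect to $\mu$ and an operator $\triangle$ if for all $a,b\in Y$: $\mu(\{f|_A\ge a\}\cap\{g|_B\ge b\})\ge\mu(\{f|_A\ge a\})\,\triangle\,\mu(\{g|_B\ge b\})$. *)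

theory Defs
  imports "HOL-Analysis.Analysis"
begin

definition Yset_ok :: "ereal set \<Rightarrow> bool" where
  "Yset_ok Y \<longleftrightarrow> Y = {0..1} \<or> Y = {0..\<infinity>}"

text \<open>Real powers on Y (only used for nonnegative bases and positive exponents):
  \<infinity>^t = \<infinity>, otherwise the usual real power.\<close>

definition ypow :: "ereal \<Rightarrow> real \<Rightarrow> ereal" where
  "ypow x t = (if x = \<infinity> then \<infinity> else ereal (real_of_ereal x powr t))"

definition monotone_measure :: "'a measure \<Rightarrow> ereal set \<Rightarrow> ('a set \<Rightarrow> ereal) \<Rightarrow> bool" where
  "monotone_measure M Y \<mu> \<longleftrightarrow>
     (\<forall>A\<in>sets M. \<mu> A \<in> Y) \<and> \<mu> {} = 0 \<and> \<mu> (space M) > 0 \<and>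
     (\<forall>A\<in>sets M. \<forall>B\<in>sets M. A \<subseteq> B \<longrightarrow> \<mu> A \<le> \<mu> B)"

definition op_on :: "ereal set \<Rightarrow> (ereal \<Rightarrow> ereal \<Rightarrow> ereal) \<Rightarrow> bool" where
  "op_on Y op \<longleftrightarrow> (\<forall>a\<in>Y. \<forall>b\<in>Y. op a b \<in> Y)"

definition nondecreasing_op :: "ereal set \<Rightarrow> (ereal \<Rightarrow> ereal \<Rightarrow> ereal) \<Rightarrow> bool" where
  "nondecreasing_op Y op \<longleftrightarrow>
     (\<forall>a\<in>Y. \<forall>b\<in>Y. \<forall>c\<in>Y. \<forall>d\<in>Y. a \<ge> b \<and> c \<ge> d \<longrightarrow> op a c \<ge> op b d)"

definition left_continuous_op :: "ereal set \<Rightarrow> (ereal \<Rightarrow> ereal \<Rightarrow> ereal) \<Rightarrow> bool" where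
  "left_continuous_op Y op \<longleftrightarrow>
     (\<forall>xs ys x y. (\<forall>n. xs n \<in> Y \<and> ys n \<in> Y) \<and> x \<in> Y \<and> y \<in> Y \<and>
        strict_mono xs \<and> strict_mono ys \<and> xs \<longlonglongrightarrow> x \<and> ys \<longlonglongrightarrow> y
        \<longrightarrow> (\<lambda>n. op (xs n) (ys n)) \<longlonglongrightarrow> op x y)"

definition sugeno :: "'a measure \<Rightarrow> ereal set \<Rightarrow> (ereal \<Rightarrow> ereal \<Rightarrow> ereal) \<Rightarrow>
    ('a set \<Rightarrow> ereal) \<Rightarrow> 'a set \<Rightarrow> ('a \<Rightarrow> ereal) \<Rightarrow> ereal" where
  "sugeno M Y op \<mu> A h = (SUP \<alpha>\<in>Y. op \<alpha> (\<mu> (A \<inter> {x\<in>space M. h x \<ge> \<alpha>})))"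

definition pos_dependent :: "'a measure \<Rightarrow> ereal set \<Rightarrow> ('a set \<Rightarrow> ereal) \<Rightarrow>
    (ereal \<Rightarrow> ereal \<Rightarrow> ereal) \<Rightarrow> ('a \<Rightarrow> ereal) \<Rightarrow> 'a set \<Rightarrow> ('a \<Rightarrow> ereal) \<Rightarrow> 'a set \<Rightarrow> bool" where
  "pos_dependent M Y \<mu> tri f A g B \<longleftrightarrow>
     (\<forall>a\<in>Y. \<forall>b\<in>Y.
        \<mu> ((A \<inter> {x\<in>space M. f x \<ge> a}) \<inter> (B \<inter> {x\<in>space M. g x \<ge> b}))
          \<ge> tri (\<mu> (A \<inter> {x\<in>space M. f x \<ge> a})) (\<mu> (B \<inter> {x\<in>space M. g x \<ge> b})))"

end

theory Submission
  imports Defs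
begin

text \<open>Upper level sets of f on A and of g on B combine, by the hypothesis linking
  \<open>\<circ>, \<box>, \<triangle>, \<circledcirc>\<close> and by positive dependence, into an upper level set of \<open>f \<box> g\<close> on
  \<open>A \<inter> B\<close>.  Hence \<open>a \<circledcirc> b \<le> \<integral>\<^sub>A\<^sub>\<inter>\<^sub>B f \<box> g\<close> for all a, b strictly below the integrals of
  f and g, and left-continuity of \<open>\<circledcirc>\<close> gives
  \<open>(\<integral>\<^sub>A f) \<circledcirc> (\<integral>\<^sub>B g) \<le> \<integral>\<^sub>A\<^sub>\<inter>\<^sub>B f \<box> g\<close>.  Independently, \<open>a\<^sup>t \<circ> b \<ge> (a \<circ> b)\<^sup>t\<close> yields
  the Jensen-type inequality \<open>(\<integral> k)\<^sup>t \<le> \<integral> k\<^sup>t\<close> for t \<ge> 1.  Raising to the powers r, s and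
  using monotonicity of \<open>\<star>\<close> finishes the proof.\<close>

abbreviation upper_set :: "'a measure \<Rightarrow> 'a set \<Rightarrow> ('a \<Rightarrow> ereal) \<Rightarrow> ereal \<Rightarrow> 'a set" where
  "upper_set M C k \<alpha> \<equiv> C \<inter> {x\<in>space M. \<alpha> \<le> k x}"

lemma op_onD: "op_on Y op \<Longrightarrow> a \<in> Y \<Longrightarrow> b \<in> Y \<Longrightarrow> op a b \<in> Y"
  by (simp add: op_on_def)

lemma nondecreasing_opD:
  "nondecreasing_op Y op \<Longrightarrow> a \<in> Y \<Longrightarrow> b \<in> Y \<Longrightarrow> c \<in> Y \<Longrightarrow> d \<in> Y \<Longrightarrow>
    b \<le> a \<Longrightarrow> d \<le> c \<Longrightarrow> op b d \<le> op a c"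
  unfolding nondecreasing_op_def by blast

subsection \<open>Real powers on the extended reals\<close>

lemma ypow_nonneg: "0 \<le> ypow x t"
  by (simp add: ypow_def)

lemma ypow_mono: "0 \<le> x \<Longrightarrow> x \<le> y \<Longrightarrow> 0 \<le> t \<Longrightarrow> ypow x t \<le> ypow y t"
  by (cases x; cases y) (auto simp: ypow_def powr_mono2)

lemma ypow_strict_mono: "0 \<le> x \<Longrightarrow> x < y \<Longrightarrow> 0 < t \<Longrightarrow> ypow x t < ypow y t"
  by (cases x; cases y) (auto simp: ypow_def powr_less_mono2)

lemma ypow_le_ypow_iff: "0 \<le> x \<Longrightarrow> 0 \<le> y \<Longrightarrow> 0 < t \<Longrightarrow> ypow x t \<le> ypow y t \<longleftrightarrow> x \<le> y"
  using ypow_mono[of x y t] ypow_strict_mono[of y x t] by (auto simp: not_le[symmetric])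

lemma ypow_ypow: "0 \<le> x \<Longrightarrow> 0 < a \<Longrightarrow> 0 < b \<Longrightarrow> ypow (ypow x a) b = ypow x (a * b)"
  by (cases x) (auto simp: ypow_def powr_powr)

lemma ypow_1: "0 \<le> x \<Longrightarrow> ypow x 1 = x"
  by (cases x) (auto simp: ypow_def)

lemma ypow_ypow_inverse: "0 \<le> x \<Longrightarrow> 0 < t \<Longrightarrow> ypow (ypow x t) (1 / t) = x"
  by (simp add: ypow_ypow ypow_1)

lemma ypow_le_ypow_divide:
  assumes "0 \<le> x" "x \<le> y" "ypow y p \<le> z" "0 < p" "0 < r"
  shows "ypow x r \<le> ypow z (r / p)"
proof -
  have "ypow x r \<le> ypow y r"
    using assms by (intro ypow_mono) auto
  also have "\<dots> = ypow (ypow y p) (r / p)"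
    using assms by (simp add: ypow_ypow)
  also have "\<dots> \<le> ypow z (r / p)"
    using assms by (intro ypow_mono ypow_nonneg) auto
  finally show ?thesis .
qed

lemma borel_measurable_ypow:
  assumes "k \<in> borel_measurable M" shows "(\<lambda>x. ypow (k x) t) \<in> borel_measurable M"
  using assms unfolding ypow_def by measurable

lemma Yset_ok_iff:
  assumes "Yset_ok Y" shows "y \<in> Y \<longleftrightarrow> 0 \<le> y \<and> y \<le> Sup Y"
  using assms by (auto simp: Yset_ok_def)

lemma Yset_ok_Sup_pos: "Yset_ok Y \<Longrightarrow> 0 < Sup Y"
  by (auto simp: Yset_ok_def)

lemma ypow_in_Yset:
  assumes Y: "Yset_ok Y" and "x \<in> Y" "0 < t"
  shows "ypow x t \<in> Y"
  using Y unfolding Yset_ok_def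
proof
  assume "Y = {0..1}"
  then have "ypow x t \<le> ypow 1 t"
    using assms by (intro ypow_mono) auto
  also have "ypow 1 t = 1"
    by (simp add: ypow_def)
  finally show ?thesis
    using \<open>Y = {0..1}\<close> by (simp add: ypow_nonneg)
qed (simp add: ypow_nonneg)

lemma approx_from_below:
  fixes c :: ereal assumes "0 < c"
  shows "\<exists>xs. strict_mono xs \<and> (\<forall>n. 0 \<le> xs n \<and> xs n < c) \<and> xs \<longlonglongrightarrow> c"
proof (cases c)
  case PInf
  then show ?thesis
    by (intro exI[of _ "\<lambda>n. ereal (real n)"])
       (auto simp: strict_mono_def id_nat_ereal_tendsto_PInf)
next
  case (real r)
  with assms have r: "0 < r" by simp
  define xs where "xs n = r - r / (real n + 2)" for n
  have "strict_mono xs"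
    using r by (intro strict_monoI_Suc) (simp add: xs_def divide_strict_left_mono)
  moreover have "filterlim (\<lambda>n. real n + 2) at_top sequentially"
    using filterlim_tendsto_add_at_top[OF tendsto_const filterlim_real_sequentially, of 2]
    by (simp add: add.commute)
  then have "(\<lambda>n. r / (real n + 2)) \<longlonglongrightarrow> 0"
    by (intro tendsto_divide_0[OF tendsto_const] filterlim_at_top_imp_at_infinity)
  then have "xs \<longlonglongrightarrow> r"
    unfolding xs_def using tendsto_diff[OF tendsto_const[of r]] by fastforce
  moreover have "0 \<le> xs n \<and> xs n < r" for n
    using r by (auto simp: xs_def field_simps)
  ultimately show ?thesis
    using real by (intro exI[of _ "\<lambda>n. ereal (xs n)"]) (auto simp: strict_mono_def)
qed (use assms in simp)

lemma left_continuous_op_le: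
  assumes Y: "Yset_ok Y" and lc: "left_continuous_op Y op"
    and xy: "x \<in> Y" "y \<in> Y" "0 < x" "0 < y"
    and bound: "\<And>u v. u \<in> Y \<Longrightarrow> v \<in> Y \<Longrightarrow> u < x \<Longrightarrow> v < y \<Longrightarrow> op u v \<le> J"
  shows "op x y \<le> J"
proof -
  obtain xs where xs: "strict_mono xs" "\<And>n. 0 \<le> xs n \<and> xs n < x" "xs \<longlonglongrightarrow> x"
    using approx_from_below[OF xy(3)] by blast
  obtain ys where ys: "strict_mono ys" "\<And>n. 0 \<le> ys n \<and> ys n < y" "ys \<longlonglongrightarrow> y"
    using approx_from_below[OF xy(4)] by blast
  have in_Y: "xs n \<in> Y" "ys n \<in> Y" for n
    using xs(2)[of n] ys(2)[of n] xy(1,2) unfolding Yset_ok_iff[OF Y] by auto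
  have "(\<lambda>n. op (xs n) (ys n)) \<longlonglongrightarrow> op x y"
    using lc xs ys xy in_Y unfolding left_continuous_op_def by blast
  then show ?thesis
    by (rule LIMSEQ_le_const2) (use bound in_Y xs(2) ys(2) in blast)
qed

subsection \<open>Generalized Sugeno integrals\<close>

locale sugeno_scale =
  fixes M :: "'a measure" and Y :: "ereal set" and \<mu> :: "'a set \<Rightarrow> ereal"
    and circ :: "ereal \<Rightarrow> ereal \<Rightarrow> ereal"
  assumes Y: "Yset_ok Y" and mu: "monotone_measure M Y \<mu>" and circ_in: "op_on Y circ"
begin

lemma in_Y_iff: "y \<in> Y \<longleftrightarrow> 0 \<le> y \<and> y \<le> Sup Y"
  using Yset_ok_iff[OF Y] .

lemma in_Y_nonneg: "y \<in> Y \<Longrightarrow> 0 \<le> y"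
  by (simp add: in_Y_iff)

lemma zero_in_Y: "0 \<in> Y" and Sup_in_Y: "Sup Y \<in> Y"
  using Yset_ok_Sup_pos[OF Y] by (auto simp: in_Y_iff)

lemma measure_in_Y: "S \<in> sets M \<Longrightarrow> \<mu> S \<in> Y"
  using mu by (simp add: monotone_measure_def)

lemma measure_mono: "S \<in> sets M \<Longrightarrow> S' \<in> sets M \<Longrightarrow> S \<subseteq> S' \<Longrightarrow> \<mu> S \<le> \<mu> S'"
  using mu by (simp add: monotone_measure_def)

lemma upper_set_sets:
  assumes "C \<in> sets M" "k \<in> borel_measurable M" shows "upper_set M C k \<alpha> \<in> sets M"
proof -
  have "{x\<in>space M. \<alpha> \<le> k x} \<in> sets M"
    using assms(2) by measurable
  with assms(1) show ?thesis by blast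
qed

lemma circ_measure_in_Y:
  "\<alpha> \<in> Y \<Longrightarrow> C \<in> sets M \<Longrightarrow> k \<in> borel_measurable M \<Longrightarrow> circ \<alpha> (\<mu> (upper_set M C k \<alpha>)) \<in> Y"
  by (intro op_onD[OF circ_in] measure_in_Y upper_set_sets)

lemma sugeno_upper:
  "\<alpha> \<in> Y \<Longrightarrow> circ \<alpha> (\<mu> (upper_set M C k \<alpha>)) \<le> sugeno M Y circ \<mu> C k"
  unfolding sugeno_def by (rule SUP_upper)

lemma sugeno_in_Y:
  assumes "C \<in> sets M" "k \<in> borel_measurable M"
  shows "sugeno M Y circ \<mu> C k \<in> Y"
proof -
  have "sugeno M Y circ \<mu> C k \<le> Sup Y"
    unfolding sugeno_def using assms circ_measure_in_Y by (intro SUP_least) (simp add: in_Y_iff)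
  moreover have "0 \<le> circ 0 (\<mu> (upper_set M C k 0))"
    using circ_measure_in_Y[OF zero_in_Y assms] by (simp add: in_Y_iff)
  ultimately show ?thesis
    using sugeno_upper[OF zero_in_Y, of C k] by (simp add: in_Y_iff)
qed

lemma sugeno_power_le:
  assumes power: "\<And>a b. a \<in> Y \<Longrightarrow> b \<in> Y \<Longrightarrow> ypow (circ a b) t \<le> circ (ypow a t) b"
    and t: "1 \<le> t" and C: "C \<in> sets M" and k: "k \<in> borel_measurable M"
    and k_in: "\<And>x. x \<in> space M \<Longrightarrow> k x \<in> Y"
  shows "ypow (sugeno M Y circ \<mu> C k) t \<le> sugeno M Y circ \<mu> C (\<lambda>x. ypow (k x) t)"
proof -
  define J where "J = sugeno M Y circ \<mu> C (\<lambda>x. ypow (k x) t)"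
  have J_in: "J \<in> Y"
    unfolding J_def using C borel_measurable_ypow[OF k] by (rule sugeno_in_Y)
  have "circ \<alpha> (\<mu> (upper_set M C k \<alpha>)) \<le> ypow J (1 / t)" if \<alpha>: "\<alpha> \<in> Y" for \<alpha>
  proof -
    define m where "m = \<mu> (upper_set M C k \<alpha>)"
    have m_in: "m \<in> Y" and z_in: "circ \<alpha> m \<in> Y"
      unfolding m_def using \<alpha> C k by (auto intro: measure_in_Y upper_set_sets circ_measure_in_Y)
    have "upper_set M C k \<alpha> = upper_set M C (\<lambda>x. ypow (k x) t) (ypow \<alpha> t)"
      using \<alpha> k_in t ypow_le_ypow_iff[of \<alpha> _ t] by (auto simp: in_Y_iff)
    then have "ypow (circ \<alpha> m) t \<le> circ (ypow \<alpha> t) (\<mu> (upper_set M C (\<lambda>x. ypow (k x) t) (ypow \<alpha> t)))"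
      using power[OF \<alpha> m_in] by (simp add: m_def)
    also have "\<dots> \<le> J"
      unfolding J_def using ypow_in_Yset[OF Y \<alpha>] t by (intro sugeno_upper) simp
    finally have "ypow (ypow (circ \<alpha> m) t) (1 / t) \<le> ypow J (1 / t)"
      using t by (intro ypow_mono ypow_nonneg) auto
    then show ?thesis
      using z_in t by (simp add: ypow_ypow_inverse in_Y_iff m_def)
  qed
  then have "sugeno M Y circ \<mu> C k \<le> ypow J (1 / t)"
    unfolding sugeno_def by (rule SUP_least)
  then have "ypow (sugeno M Y circ \<mu> C k) t \<le> ypow (ypow J (1 / t)) t"
    using sugeno_in_Y[OF C k] t by (intro ypow_mono) (auto simp: in_Y_iff)
  also have "\<dots> = J"
    using J_in t by (simp add: ypow_ypow ypow_1 in_Y_iff)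
  finally show ?thesis
    unfolding J_def .
qed

end

subsection \<open>Integral of a combination of two functions\<close>

locale sugeno_merge = sugeno_scale +
  fixes box ocirc tri :: "ereal \<Rightarrow> ereal \<Rightarrow> ereal"
  assumes box_in: "op_on Y box" and ocirc_in: "op_on Y ocirc" and tri_in: "op_on Y tri"
    and circ_mono: "nondecreasing_op Y circ" and box_mono: "nondecreasing_op Y box"
    and ocirc_mono: "nondecreasing_op Y ocirc"
    and ocirc_lc: "left_continuous_op Y ocirc"
    and merge: "\<And>a b c d. a \<in> Y \<Longrightarrow> b \<in> Y \<Longrightarrow> c \<in> Y \<Longrightarrow> d \<in> Y \<Longrightarrow>
      ocirc (circ a c) (circ b d) \<le> circ (box a b) (tri c d)"
begin

lemma sugeno_le_top:
  assumes "C \<in> sets M" "k \<in> borel_measurable M"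
  shows "sugeno M Y circ \<mu> C k \<le> circ (Sup Y) (\<mu> (upper_set M C k 0))"
  unfolding sugeno_def
proof (rule SUP_least)
  fix \<alpha> assume \<alpha>: "\<alpha> \<in> Y"
  have "upper_set M C k \<alpha> \<subseteq> upper_set M C k 0"
    using \<alpha> by (auto simp: in_Y_iff)
  then show "circ \<alpha> (\<mu> (upper_set M C k \<alpha>)) \<le> circ (Sup Y) (\<mu> (upper_set M C k 0))"
    using assms \<alpha> by (intro nondecreasing_opD[OF circ_mono] Sup_in_Y measure_in_Y measure_mono
        upper_set_sets) (auto simp: in_Y_iff)
qed

context
  fixes A B :: "'a set" and f g :: "'a \<Rightarrow> ereal"
  assumes A: "A \<in> sets M" and B: "B \<in> sets M"
    and f: "f \<in> borel_measurable M" and g: "g \<in> borel_measurable M"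
    and f_in: "\<And>x. x \<in> space M \<Longrightarrow> f x \<in> Y" and g_in: "\<And>x. x \<in> space M \<Longrightarrow> g x \<in> Y"
    and dep: "pos_dependent M Y \<mu> tri f A g B"
begin

lemma merge_upper_sets:
  assumes "a \<in> Y" "b \<in> Y" "\<alpha> \<in> Y" "\<beta> \<in> Y"
  shows "ocirc (circ a (\<mu> (upper_set M A f \<alpha>))) (circ b (\<mu> (upper_set M B g \<beta>)))
    \<le> circ (box a b) (\<mu> (upper_set M A f \<alpha> \<inter> upper_set M B g \<beta>))"
proof -
  have sets: "upper_set M A f \<alpha> \<in> sets M" "upper_set M B g \<beta> \<in> sets M"
    using A B f g by (auto intro: upper_set_sets)
  then have inter: "upper_set M A f \<alpha> \<inter> upper_set M B g \<beta> \<in> sets M"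
    by blast
  have "tri (\<mu> (upper_set M A f \<alpha>)) (\<mu> (upper_set M B g \<beta>))
      \<le> \<mu> (upper_set M A f \<alpha> \<inter> upper_set M B g \<beta>)"
    using dep assms unfolding pos_dependent_def by blast
  then have "circ (box a b) (tri (\<mu> (upper_set M A f \<alpha>)) (\<mu> (upper_set M B g \<beta>)))
      \<le> circ (box a b) (\<mu> (upper_set M A f \<alpha> \<inter> upper_set M B g \<beta>))"
    using assms sets inter by (intro nondecreasing_opD[OF circ_mono] op_onD[OF box_in]
        op_onD[OF tri_in] measure_in_Y) auto
  then show ?thesis
    using merge[OF assms(1,2) measure_in_Y[OF sets(1)] measure_in_Y[OF sets(2)]] by order
qed

lemma merge_top_levels:
  assumes "\<alpha> \<in> Y" "\<beta> \<in> Y"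
  defines "a \<equiv> circ (Sup Y) (\<mu> (upper_set M A f \<alpha>))"
    and "b \<equiv> circ (Sup Y) (\<mu> (upper_set M B g \<beta>))"
  shows "ocirc a b \<le> a" "ocirc a b \<le> b"
proof -
  have sets: "upper_set M A f \<alpha> \<in> sets M" "upper_set M B g \<beta> \<in> sets M"
    using A B f g by (auto intro: upper_set_sets)
  then have inter: "upper_set M A f \<alpha> \<inter> upper_set M B g \<beta> \<in> sets M"
    by blast
  have box_top: "box (Sup Y) (Sup Y) \<le> Sup Y"
    using op_onD[OF box_in Sup_in_Y Sup_in_Y] by (simp add: in_Y_iff)
  have "ocirc a b \<le> circ (box (Sup Y) (Sup Y)) (\<mu> (upper_set M A f \<alpha> \<inter> upper_set M B g \<beta>))"
    unfolding a_def b_def using assms Sup_in_Y by (intro merge_upper_sets)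
  moreover have "circ (box (Sup Y) (Sup Y)) (\<mu> (upper_set M A f \<alpha> \<inter> upper_set M B g \<beta>)) \<le> a"
    "circ (box (Sup Y) (Sup Y)) (\<mu> (upper_set M A f \<alpha> \<inter> upper_set M B g \<beta>)) \<le> b"
    unfolding a_def b_def using sets inter box_top
    by (intro nondecreasing_opD[OF circ_mono] op_onD[OF box_in] Sup_in_Y measure_in_Y
        measure_mono; blast)+
  ultimately show "ocirc a b \<le> a" "ocirc a b \<le> b"
    by order+
qed

context
  assumes fg: "(\<lambda>x. box (f x) (g x)) \<in> borel_measurable M"
begin

lemma merge_levels_le_sugeno:
  assumes \<alpha>: "\<alpha> \<in> Y" and \<beta>: "\<beta> \<in> Y"
  shows "ocirc (circ \<alpha> (\<mu> (upper_set M A f \<alpha>))) (circ \<beta> (\<mu> (upper_set M B g \<beta>)))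
    \<le> sugeno M Y circ \<mu> (A \<inter> B) (\<lambda>x. box (f x) (g x))"
proof -
  let ?S = "upper_set M (A \<inter> B) (\<lambda>x. box (f x) (g x)) (box \<alpha> \<beta>)"
  have sets: "upper_set M A f \<alpha> \<inter> upper_set M B g \<beta> \<in> sets M" "?S \<in> sets M"
    using A B f g fg by (auto intro: upper_set_sets)
  have "upper_set M A f \<alpha> \<inter> upper_set M B g \<beta> \<subseteq> ?S"
    using \<alpha> \<beta> f_in g_in nondecreasing_opD[OF box_mono] by auto
  then have "circ (box \<alpha> \<beta>) (\<mu> (upper_set M A f \<alpha> \<inter> upper_set M B g \<beta>)) \<le> circ (box \<alpha> \<beta>) (\<mu> ?S)"
    using \<alpha> \<beta> sets by (intro nondecreasing_opD[OF circ_mono] op_onD[OF box_in]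
        measure_in_Y measure_mono) auto
  also have "\<dots> \<le> sugeno M Y circ \<mu> (A \<inter> B) (\<lambda>x. box (f x) (g x))"
    using \<alpha> \<beta> by (intro sugeno_upper op_onD[OF box_in])
  finally show ?thesis
    using merge_upper_sets[OF \<alpha> \<beta> \<alpha> \<beta>] by order
qed

theorem ocirc_sugeno_le_sugeno:
  "ocirc (sugeno M Y circ \<mu> A f) (sugeno M Y circ \<mu> B g)
    \<le> sugeno M Y circ \<mu> (A \<inter> B) (\<lambda>x. box (f x) (g x))"
proof -
  define I1 I2 J where "I1 = sugeno M Y circ \<mu> A f" and "I2 = sugeno M Y circ \<mu> B g"
    and "J = sugeno M Y circ \<mu> (A \<inter> B) (\<lambda>x. box (f x) (g x))"
  have in_Y: "I1 \<in> Y" "I2 \<in> Y" "J \<in> Y"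
    unfolding I1_def I2_def J_def using A B f g fg by (auto intro: sugeno_in_Y)
  have top_in_Y: "circ (Sup Y) (\<mu> (upper_set M A f \<alpha>)) \<in> Y"
    "circ (Sup Y) (\<mu> (upper_set M B g \<alpha>)) \<in> Y" for \<alpha>
    using A B f g by (auto intro!: op_onD[OF circ_in] Sup_in_Y measure_in_Y upper_set_sets)
  have J_nonneg: "0 \<le> J"
    using in_Y(3) by (rule in_Y_nonneg)
  \<comment> \<open>Left-continuity only reaches positive limits; if one integral vanishes,
    \<open>I1 \<circledcirc> I2\<close> is bounded by that integral itself, using \<open>top \<box> top \<le> top\<close>.\<close>
  consider "I2 = 0" | "I1 = 0" | "0 < I1" "0 < I2"
    using in_Y by (force simp: in_Y_iff)
  then have "ocirc I1 I2 \<le> J"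
  proof cases
    case 1
    have "ocirc I1 I2 \<le> ocirc (circ (Sup Y) (\<mu> (upper_set M A f 0)))
        (circ (Sup Y) (\<mu> (upper_set M B g (Sup Y))))"
      using 1 in_Y top_in_Y sugeno_le_top[OF A f]
      by (intro nondecreasing_opD[OF ocirc_mono]) (auto simp: I1_def in_Y_iff)
    also have "\<dots> \<le> circ (Sup Y) (\<mu> (upper_set M B g (Sup Y)))"
      using zero_in_Y Sup_in_Y by (rule merge_top_levels)
    also have "\<dots> \<le> I2"
      unfolding I2_def using Sup_in_Y by (rule sugeno_upper)
    finally show ?thesis
      using 1 J_nonneg by order
  next
    case 2
    have "ocirc I1 I2 \<le> ocirc (circ (Sup Y) (\<mu> (upper_set M A f (Sup Y))))
        (circ (Sup Y) (\<mu> (upper_set M B g 0)))"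
      using 2 in_Y top_in_Y sugeno_le_top[OF B g]
      by (intro nondecreasing_opD[OF ocirc_mono]) (auto simp: I2_def in_Y_iff)
    also have "\<dots> \<le> circ (Sup Y) (\<mu> (upper_set M A f (Sup Y)))"
      using Sup_in_Y zero_in_Y by (rule merge_top_levels)
    also have "\<dots> \<le> I1"
      unfolding I1_def using Sup_in_Y by (rule sugeno_upper)
    finally show ?thesis
      using 2 J_nonneg by order
  next
    case 3
    have "ocirc u v \<le> J" if "u \<in> Y" "v \<in> Y" "u < I1" "v < I2" for u v
    proof -
      obtain \<alpha> where \<alpha>: "\<alpha> \<in> Y" "u < circ \<alpha> (\<mu> (upper_set M A f \<alpha>))"
        using \<open>u < I1\<close> unfolding I1_def sugeno_def less_SUP_iff by blast
      obtain \<beta> where \<beta>: "\<beta> \<in> Y" "v < circ \<beta> (\<mu> (upper_set M B g \<beta>))"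
        using \<open>v < I2\<close> unfolding I2_def sugeno_def less_SUP_iff by blast
      have "ocirc u v \<le> ocirc (circ \<alpha> (\<mu> (upper_set M A f \<alpha>))) (circ \<beta> (\<mu> (upper_set M B g \<beta>)))"
        using that \<alpha> \<beta> A B f g
        by (intro nondecreasing_opD[OF ocirc_mono] circ_measure_in_Y) auto
      also have "\<dots> \<le> J"
        unfolding J_def using \<alpha>(1) \<beta>(1) by (rule merge_levels_le_sugeno)
      finally show ?thesis .
    qed
    then show ?thesis
      using left_continuous_op_le[OF Y ocirc_lc in_Y(1,2) 3] by simp
  qed
  then show ?thesis
    unfolding I1_def I2_def J_def .
qed

end

end

end

theorem mainTheorem1:
  fixes M :: "'a measure" and Y :: "ereal set" and \<mu> :: "'a set \<Rightarrow> ereal"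
    and circ star box ocirc tri :: "ereal \<Rightarrow> ereal \<Rightarrow> ereal"
    and p q r s :: real and A B :: "'a set" and f g h :: "'a \<Rightarrow> ereal"
  assumes Y: "Yset_ok Y"
    and mu: "monotone_measure M Y \<mu>"
    and ops: "op_on Y circ" "op_on Y star" "op_on Y box" "op_on Y ocirc" "op_on Y tri"
    and nd: "nondecreasing_op Y circ" "nondecreasing_op Y star" "nondecreasing_op Y box"
            "nondecreasing_op Y ocirc"
    and lc: "left_continuous_op Y ocirc"
    and H1: "\<And>a b t. a \<in> Y \<Longrightarrow> b \<in> Y \<Longrightarrow> t \<ge> 1 \<Longrightarrow>
               circ (ypow a t) b \<ge> ypow (circ a b) t"
    and H2: "\<And>a b c d. a \<in> Y \<Longrightarrow> b \<in> Y \<Longrightarrow> c \<in> Y \<Longrightarrow> d \<in> Y \<Longrightarrow>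
               circ (box a b) (tri c d) \<ge> ocirc (circ a c) (circ b d)"
    and pq: "p \<ge> 1" "q \<ge> 1" and rs: "r > 0" "s > 0"
    and AB: "A \<in> sets M" "B \<in> sets M"
    and meas: "f \<in> borel_measurable M" "g \<in> borel_measurable M" "h \<in> borel_measurable M"
    and range: "\<And>x. x \<in> space M \<Longrightarrow> f x \<in> Y \<and> g x \<in> Y \<and> h x \<in> Y"
    and meas2: "(\<lambda>x. box (f x) (g x)) \<in> borel_measurable M"
               "(\<lambda>x. box (f x) (h x)) \<in> borel_measurable M"
    and dep: "pos_dependent M Y \<mu> tri f A g B" "pos_dependent M Y \<mu> tri f A h B"
  shows "star (ypow (ocirc (sugeno M Y circ \<mu> A f) (sugeno M Y circ \<mu> B g)) r)
              (ypow (ocirc (sugeno M Y circ \<mu> A f) (sugeno M Y circ \<mu> B h)) s)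
         \<le> star (ypow (sugeno M Y circ \<mu> (A \<inter> B) (\<lambda>x. ypow (box (f x) (g x)) p)) (r / p))
                (ypow (sugeno M Y circ \<mu> (A \<inter> B) (\<lambda>x. ypow (box (f x) (h x)) q)) (s / q))"
  proof -
  interpret sugeno_merge M Y \<mu> circ box ocirc tri
    using Y mu ops nd lc H2 by unfold_locales auto
  have f_in: "\<And>x. x \<in> space M \<Longrightarrow> f x \<in> Y"
    using range by blast
  have power_bound: "ypow (ocirc (sugeno M Y circ \<mu> A f) (sugeno M Y circ \<mu> B k)) t
      \<le> ypow (sugeno M Y circ \<mu> (A \<inter> B) (\<lambda>x. ypow (box (f x) (k x)) e)) (t / e)"
    if k: "k \<in> borel_measurable M" "\<And>x. x \<in> space M \<Longrightarrow> k x \<in> Y"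
      and fk: "(\<lambda>x. box (f x) (k x)) \<in> borel_measurable M" "pos_dependent M Y \<mu> tri f A k B"
      and "1 \<le> e" "0 < t" for k e t
  proof (rule ypow_le_ypow_divide)
    show "0 \<le> ocirc (sugeno M Y circ \<mu> A f) (sugeno M Y circ \<mu> B k)"
      using AB meas k by (intro in_Y_nonneg op_onD[OF ocirc_in] sugeno_in_Y)
    show "ocirc (sugeno M Y circ \<mu> A f) (sugeno M Y circ \<mu> B k)
        \<le> sugeno M Y circ \<mu> (A \<inter> B) (\<lambda>x. box (f x) (k x))"
      using AB meas(1) k f_in fk by (intro ocirc_sugeno_le_sugeno)
    show "ypow (sugeno M Y circ \<mu> (A \<inter> B) (\<lambda>x. box (f x) (k x))) e
        \<le> sugeno M Y circ \<mu> (A \<inter> B) (\<lambda>x. ypow (box (f x) (k x)) e)"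
      using H1 \<open>1 \<le> e\<close> AB fk(1) f_in k(2) by (intro sugeno_power_le) (auto intro: op_onD[OF box_in])
  qed (use that in auto)
  have in_Y: "ypow (ocirc (sugeno M Y circ \<mu> A f) (sugeno M Y circ \<mu> B k)) t \<in> Y"
    "ypow (sugeno M Y circ \<mu> (A \<inter> B) (\<lambda>x. ypow (box (f x) (k x)) e)) (t / e) \<in> Y"
    if "k \<in> borel_measurable M" "(\<lambda>x. box (f x) (k x)) \<in> borel_measurable M" "1 \<le> e" "0 < t"
    for k e t
    using that AB meas(1) by (auto intro!: ypow_in_Yset[OF Y] op_onD[OF ocirc_in] sugeno_in_Y
        borel_measurable_ypow)
  show ?thesis
    using pq rs meas meas2 range dep
    by (intro nondecreasing_opD[OF nd(2)] power_bound in_Y) auto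
qed

end
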